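(* Let $f$ be a Dirichlet series mapping $\mathbb{C}_0$ to $\mathbb{D}$. Then \[\limsup_{T\to \infty} N_f(\xi,T) \leq \log\left|\frac{1-\overline{\xi}f(+\infty)}{\xi-f(+\infty)}\right|\] for every $\xi$ in $\mathbb{D} \setminus \{f(+\infty)\}$.
   Context: $\mathbb{C}_\kappa=\{s:\mathrm{Re}\,s>\kappa\}$ and $\mathbb{D}$ is the open unit disc. A "Dirichlet series mapping $\mathbb{C}_0$ to $\mathbb{D}$" is an analytic function $f:\mathbb{C}_0\to\mathbb{D}$ represented by a Dirichlet series $\sum_{n\ge1}a_nn^{-s}$ converging in $\mathbb{C}_\kappa$ for some $\kappa>0$; $f(+\infty)=a_1$. For $T>0$ and $\xi\in\mathbb{D}$, $N_f(\xi,T)=\frac{\pi}{T}\sum\mathrm{Re}\,s$, summing over all $s\in\mathbb{C}_0$ with $f(s)=\xi$ and $|\mathrm{Im}\,s|<T$, counted with multiplicity. *)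

theory Defs
  imports "HOL-Complex_Analysis.Complex_Analysis"
begin

definition halfplane :: "real \<Rightarrow> complex set" where
  "halfplane k = {s. Re s > k}"

text \<open>f is a Dirichlet series mapping C_0 to the unit disc D, with coefficient
  sequence a (a n is the coefficient of n^(-s), n \<ge> 1; a 0 is irrelevant):
  f is analytic on C_0, maps C_0 into D, and for some kappa > 0 the series
  sum_{n\<ge>1} a n * n^(-s) converges to f s for every s in C_kappa.
  Then f(+infinity) = a 1.\<close>
definition dirichlet_C0_to_D :: "(complex \<Rightarrow> complex) \<Rightarrow> (nat \<Rightarrow> complex) \<Rightarrow> bool" where
  "dirichlet_C0_to_D f a \<longleftrightarrow>
     f holomorphic_on halfplane 0 \<and>
     (\<forall>s\<in>halfplane 0. f s \<in> ball 0 1) \<and>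
     (\<exists>\<kappa>>0. \<forall>s\<in>halfplane \<kappa>.
        (\<lambda>n. a (Suc n) * of_nat (Suc n) powr (- s)) sums f s)"

text \<open>The sum has
  nonnegative terms and is taken in [0,\<infinity>] (ennreal), then viewed in ereal.\<close>
definition N_count :: "(complex \<Rightarrow> complex) \<Rightarrow> complex \<Rightarrow> real \<Rightarrow> ereal" where
  "N_count f \<xi> T = ereal (pi / T) *
     enn2ereal (\<Sum>\<^sub>\<infinity> s\<in>{s\<in>halfplane 0. \<bar>Im s\<bar> < T \<and> f s = \<xi>}.
        ennreal (real (nat (zorder (\<lambda>z. f z - \<xi>) s)) * Re s))"

end

theory Submission
  imports Defs
begin

(* Let M w = (w - \<xi>) / (1 - cnj \<xi> w) be the automorphism of D sending \<xi> to 0, and G = M o f.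
   Then G maps C_0 into D, vanishes exactly where f = \<xi> (with the same multiplicities), and |G z|
   tends to c = |M (a 1)| uniformly as Re z \<rightarrow> \<infinity>, since a Dirichlet series tends to its first
   coefficient.  Dividing out the half-plane Blaschke factors (z - s) / (z + cnj s) of finitely many
   zeros s, one at a time by Schwarz's lemma, bounds |G z|^2 by the product of the factors
   1 - 4 Re z Re s / |z + cnj s|^2.  On a vertical line Re z = \<sigma> so far to the right that |G| \<ge> c'
   there, for some c' slightly below c, this gives for every t
     \<Sum>_s m_s 4 \<sigma> Re s / |\<sigma> + i t + cnj s|^2 \<le> - 2 ln c'.
   The kernel has an arctan primitive in t; integrating over |t| \<le> T + R, with R and then T large
   multiples of \<sigma>, yields (pi / T) \<Sum>_{|Im s| < T} m_s Re s \<le> - ln c' (1 + \<eta>)^3.  Letting c' \<rightarrow> c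
   and \<eta> \<rightarrow> 0 gives the bound - ln c, which is the right-hand side of the claim. *)

section \<open>Blaschke factors of the right half-plane\<close>

definition blaschke_factor :: "complex \<Rightarrow> complex \<Rightarrow> complex" where
  "blaschke_factor s z = (z - s) / (z + cnj s)"

definition blaschke_defect :: "complex \<Rightarrow> complex \<Rightarrow> real" where
  "blaschke_defect s z = 4 * Re z * Re s / ((Re z + Re s)\<^sup>2 + (Im z - Im s)\<^sup>2)"

lemma add_cnj_nonzero: "Re z > 0 \<Longrightarrow> Re s > 0 \<Longrightarrow> z + cnj s \<noteq> 0"
  by (metis add_pos_pos cnj.simps(1) plus_complex.sel(1) zero_complex.sel(1) less_irrefl)

lemma blaschke_defect_pos:
  assumes "Re z > 0" "Re s > 0"
  shows "blaschke_defect s z > 0"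
  using assms unfolding blaschke_defect_def
  by (intro divide_pos_pos mult_pos_pos) (simp_all add: add_pos_nonneg)

lemma norm_blaschke_factor_sq:
  assumes "Re z > 0" "Re s > 0"
  shows "(cmod (blaschke_factor s z))\<^sup>2 = 1 - blaschke_defect s z"
proof -
  have d: "(Re z + Re s)\<^sup>2 + (Im z - Im s)\<^sup>2 > 0"
    using assms by (simp add: add_pos_nonneg)
  have "(cmod (blaschke_factor s z))\<^sup>2 = (cmod (z - s))\<^sup>2 / (cmod (z + cnj s))\<^sup>2"
    by (simp add: blaschke_factor_def norm_divide power_divide)
  also have "\<dots> = ((Re z - Re s)\<^sup>2 + (Im z - Im s)\<^sup>2) / ((Re z + Re s)\<^sup>2 + (Im z - Im s)\<^sup>2)"
    by (simp add: cmod_power2)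
  also have "\<dots> = 1 - blaschke_defect s z"
    using d by (simp add: blaschke_defect_def field_simps power2_eq_square)
  finally show ?thesis .
qed

lemma norm_blaschke_factor_less_1:
  assumes "Re z > 0" "Re s > 0"
  shows "cmod (blaschke_factor s z) < 1"
proof -
  have "(cmod (blaschke_factor s z))\<^sup>2 < 1\<^sup>2"
    using norm_blaschke_factor_sq[OF assms] blaschke_defect_pos[OF assms] by simp
  then show ?thesis
    by (rule power2_less_imp_less) simp
qed

definition blaschke_factor_inv :: "complex \<Rightarrow> complex \<Rightarrow> complex" where
  "blaschke_factor_inv s w = (s + w * cnj s) / (1 - w)"

lemma Re_blaschke_factor_inv_pos:
  assumes "cmod w < 1" "Re s > 0"
  shows "Re (blaschke_factor_inv s w) > 0"
proof -
  have "w \<noteq> 1" using assms(1) by auto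
  have "blaschke_factor_inv s w = (s + w * cnj s) * cnj (1 - w) / ((1 - w) * cnj (1 - w))"
    using \<open>w \<noteq> 1\<close> by (simp add: blaschke_factor_inv_def)
  also have "\<dots> = (s + w * cnj s) * cnj (1 - w) / of_real ((cmod (1 - w))\<^sup>2)"
    by (simp only: complex_norm_square)
  finally have "Re (blaschke_factor_inv s w) = Re ((s + w * cnj s) * cnj (1 - w)) / (cmod (1 - w))\<^sup>2"
    by (simp add: Re_divide_of_real)
  moreover have "Re ((s + w * cnj s) * cnj (1 - w)) = Re s * (1 - (cmod w)\<^sup>2)"
    unfolding cmod_power2 by (simp add: algebra_simps power2_eq_square)
  moreover have "(cmod w)\<^sup>2 < 1"
    using assms(1) by (simp add: power_less_one_iff)
  ultimately show ?thesis
    using assms(2) \<open>w \<noteq> 1\<close> by (simp add: divide_pos_pos)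
qed

lemma blaschke_factor_inv_blaschke_factor:
  assumes "Re z > 0" "Re s > 0"
  shows "blaschke_factor_inv s (blaschke_factor s z) = z"
proof -
  have "z + cnj s \<noteq> 0" "s + cnj s \<noteq> 0"
    using add_cnj_nonzero assms by blast+
  moreover have "s + (z - s) / (z + cnj s) * cnj s = z * (s + cnj s) / (z + cnj s)"
    and "1 - (z - s) / (z + cnj s) = (s + cnj s) / (z + cnj s)"
    using \<open>z + cnj s \<noteq> 0\<close> by (simp_all add: field_simps)
  ultimately show ?thesis
    by (simp add: blaschke_factor_inv_def blaschke_factor_def)
qed

text \<open>The hypothesis \<open>|h| \<le> 1\<close> is not strict, so Schwarz's lemma on the disc is applied to
  \<open>r \<cdot> (h \<circ> blaschke_factor_inv s)\<close> for every \<open>r < 1\<close>.\<close>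
lemma Schwarz_Lemma_half_plane:
  assumes holo: "h holomorphic_on {z. Re z > 0}"
    and bound: "\<And>z. Re z > 0 \<Longrightarrow> cmod (h z) \<le> 1"
    and s: "Re s > 0" "h s = 0" and z: "Re z > 0"
  shows "cmod (h z) \<le> cmod (blaschke_factor s z)"
proof (rule field_le_mult_one_interval)
  fix r :: real assume r: "0 < r" "r < 1"
  define F where "F w = of_real r * h (blaschke_factor_inv s w)" for w
  have "blaschke_factor_inv s ` ball 0 1 \<subseteq> {z. Re z > 0}"
    using Re_blaschke_factor_inv_pos s by auto
  moreover have "blaschke_factor_inv s holomorphic_on ball 0 1"
    unfolding blaschke_factor_inv_def by (intro holomorphic_intros) auto
  ultimately have "F holomorphic_on ball 0 1"
    unfolding F_def using holomorphic_on_compose_gen[OF _ holo] by (auto simp: o_def intro!: holomorphic_intros)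
  moreover have "F 0 = 0"
    using s by (simp add: F_def blaschke_factor_inv_def)
  moreover have "cmod (F w) < 1" if "cmod w < 1" for w
  proof -
    have "cmod (F w) = r * cmod (h (blaschke_factor_inv s w))"
      using r by (simp add: F_def norm_mult)
    also have "\<dots> \<le> r"
      using bound[OF Re_blaschke_factor_inv_pos[OF that s(1)]] r by (simp add: mult_left_le)
    finally show ?thesis using r by simp
  qed
  ultimately have "cmod (F (blaschke_factor s z)) \<le> cmod (blaschke_factor s z)"
    using Schwarz_Lemma(1) norm_blaschke_factor_less_1[OF z s(1)] by blast
  then show "r * cmod (h z) \<le> cmod (blaschke_factor s z)"
    using r by (simp add: F_def blaschke_factor_inv_blaschke_factor[OF z s(1)] norm_mult)
qed

section \<open>Zeros of given order and the Blaschke product bound\<close>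

definition zero_order_ge :: "(complex \<Rightarrow> complex) \<Rightarrow> complex \<Rightarrow> nat \<Rightarrow> bool" where
  "zero_order_ge h s m \<longleftrightarrow>
     (\<exists>r>0. \<exists>k. k holomorphic_on ball s r \<and> (\<forall>z\<in>ball s r - {s}. h z = (z - s) ^ m * k z))"

lemma zero_order_ge_imp_zero:
  assumes "zero_order_ge h s m" "m > 0" "isCont h s"
  shows "h s = 0"
proof -
  obtain r k where "r > 0" and k: "k holomorphic_on ball s r"
    and h: "\<forall>z\<in>ball s r - {s}. h z = (z - s) ^ m * k z"
    using assms(1) unfolding zero_order_ge_def by blast
  have "isCont k s"
    using k \<open>r > 0\<close>
    by (metis centre_in_ball continuous_on_interior holomorphic_on_imp_continuous_on interior_ball)
  then have "((\<lambda>z. (z - s) ^ m * k z) \<longlongrightarrow> (s - s) ^ m * k s) (at s)"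
    by (intro tendsto_intros) (simp add: isCont_def)
  then have "((\<lambda>z. (z - s) ^ m * k z) \<longlongrightarrow> 0) (at s)"
    using assms(2) by (simp add: zero_power)
  moreover have "eventually (\<lambda>z. (z - s) ^ m * k z = h z) (at s)"
    unfolding eventually_at using \<open>r > 0\<close> h by (auto simp: dist_commute)
  ultimately have "(h \<longlongrightarrow> 0) (at s)"
    by (rule Lim_transform_eventually)
  then show ?thesis
    using assms(3) by (simp add: isCont_def LIM_unique)
qed

lemma zero_order_ge_zorder:
  assumes "h holomorphic_on S" "open S" "connected S" "s \<in> S" "\<exists>w\<in>S. h w \<noteq> 0"
  shows "zero_order_ge h s (nat (zorder h s))"
proof -
  obtain r where "r > 0" and holo: "zor_poly h s holomorphic_on cball s r"
    and eq: "\<forall>w\<in>cball s r. h w = zor_poly h s w * (w - s) ^ nat (zorder h s)"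
    using zorder_exist_zero[OF assms] by blast
  have "zor_poly h s holomorphic_on ball s r"
    using holo by (rule holomorphic_on_subset) auto
  moreover have "\<forall>w\<in>ball s r - {s}. h w = (w - s) ^ nat (zorder h s) * zor_poly h s w"
    using eq by (auto simp: mult.commute)
  ultimately show ?thesis
    unfolding zero_order_ge_def using \<open>r > 0\<close> by blast
qed

lemma zero_order_ge_mult:
  assumes "zero_order_ge h s m" "u holomorphic_on S" "open S" "s \<in> S"
    and "\<And>z. z \<in> S \<Longrightarrow> g z = h z * u z"
  shows "zero_order_ge g s m"
proof -
  obtain r k where "r > 0" and k: "k holomorphic_on ball s r"
    and h: "\<forall>z\<in>ball s r - {s}. h z = (z - s) ^ m * k z"
    using assms(1) unfolding zero_order_ge_def by blast
  obtain r' where "r' > 0" "ball s r' \<subseteq> S"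
    using assms(3,4) open_contains_ball by blast
  define \<rho> where "\<rho> = min r r'"
  have "\<rho> > 0" using \<open>r > 0\<close> \<open>r' > 0\<close> by (simp add: \<rho>_def)
  have "(\<lambda>z. k z * u z) holomorphic_on ball s \<rho>"
    using \<open>ball s r' \<subseteq> S\<close>
    by (intro holomorphic_intros holomorphic_on_subset[OF k] holomorphic_on_subset[OF assms(2)])
       (auto simp: \<rho>_def)
  moreover have "\<forall>z\<in>ball s \<rho> - {s}. g z = (z - s) ^ m * (k z * u z)"
    using h assms(5) \<open>ball s r' \<subseteq> S\<close> by (force simp: \<rho>_def mult.assoc)
  ultimately show ?thesis
    unfolding zero_order_ge_def using \<open>\<rho> > 0\<close> by blast
qed

definition blaschke_quotient :: "(complex \<Rightarrow> complex) \<Rightarrow> complex \<Rightarrow> complex \<Rightarrow> complex" where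
  "blaschke_quotient h s z = (if z = s then deriv h s else (h z - h s) / (z - s)) * (z + cnj s)"

lemma blaschke_quotient_holomorphic:
  assumes "h holomorphic_on {z. Re z > 0}"
  shows "blaschke_quotient h s holomorphic_on {z. Re z > 0}"
  unfolding blaschke_quotient_def
  by (intro holomorphic_intros pole_lemma_open[OF assms] open_halfspace_Re_gt)

lemma blaschke_factor_mult_quotient:
  assumes "Re s > 0" "h s = 0" "Re z > 0"
  shows "h z = blaschke_factor s z * blaschke_quotient h s z"
  using add_cnj_nonzero[OF assms(3,1)] assms(2)
  by (cases "z = s") (simp_all add: blaschke_factor_def blaschke_quotient_def)

lemma norm_blaschke_quotient_le_1:
  assumes holo: "h holomorphic_on {z. Re z > 0}"
    and bound: "\<And>z. Re z > 0 \<Longrightarrow> cmod (h z) \<le> 1"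
    and s: "Re s > 0" "h s = 0" and z: "Re z > 0"
  shows "cmod (blaschke_quotient h s z) \<le> 1"
proof -
  let ?q = "blaschke_quotient h s"
  have off_s: "cmod (?q w) \<le> 1" if w: "Re w > 0" "w \<noteq> s" for w
  proof -
    have "cmod (blaschke_factor s w) > 0"
      using w add_cnj_nonzero[OF w(1) s(1)] by (simp add: blaschke_factor_def)
    moreover have "cmod (blaschke_factor s w) * cmod (?q w) \<le> cmod (blaschke_factor s w)"
      using Schwarz_Lemma_half_plane[OF holo bound s w(1)] blaschke_factor_mult_quotient[of s h w] s w
      by (simp add: norm_mult)
    ultimately show ?thesis by simp
  qed
  have "cmod (?q s) \<le> 1"
  proof (rule tendsto_upperbound)
    have "isCont ?q s"
      using blaschke_quotient_holomorphic[OF holo] s(1) open_halfspace_Re_gt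
      by (metis continuous_on_eq_continuous_at holomorphic_on_imp_continuous_on mem_Collect_eq)
    then show "((\<lambda>w. cmod (?q w)) \<longlongrightarrow> cmod (?q s)) (at s)"
      by (intro tendsto_intros) (simp add: isCont_def)
    have "eventually (\<lambda>w. w \<in> {z. Re z > 0}) (at s)"
      using s(1) by (intro eventually_at_in_open' open_halfspace_Re_gt) auto
    then show "eventually (\<lambda>w. cmod (?q w) \<le> 1) (at s)"
      unfolding eventually_at_filter by eventually_elim (use off_s in auto)
  qed simp
  then show ?thesis
    using off_s z by (cases "z = s") auto
qed

lemma ball_subset_half_plane:
  assumes "Re s > 0"
  shows "ball s (Re s) \<subseteq> {z. Re z > 0}"
proof
  fix z assume "z \<in> ball s (Re s)"
  then have "Re s - Re z < Re s"
    using abs_Re_le_cmod[of "s - z"] by (simp add: dist_norm)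
  then show "z \<in> {z. Re z > 0}" by simp
qed

lemma zero_order_ge_divide_blaschke_factor_other:
  assumes "zero_order_ge h s' m" "s' \<noteq> s" "Re s > 0" "Re s' > 0"
    and eq: "\<And>z. Re z > 0 \<Longrightarrow> h z = blaschke_factor s z * g z"
  shows "zero_order_ge g s' m"
proof -
  obtain r k where "r > 0" and k: "k holomorphic_on ball s' r"
    and h: "\<forall>z\<in>ball s' r - {s'}. h z = (z - s') ^ m * k z"
    using assms(1) unfolding zero_order_ge_def by blast
  define \<rho> where "\<rho> = min r (min (dist s' s) (Re s'))"
  have "\<rho> > 0" using \<open>r > 0\<close> assms(2,4) by (simp add: \<rho>_def)
  have pos: "Re z > 0" and nonzero: "blaschke_factor s z \<noteq> 0" if "z \<in> ball s' \<rho>" for z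
  proof -
    show "Re z > 0"
      using that ball_subset_half_plane[OF assms(4)] by (auto simp: \<rho>_def)
    moreover have "z \<noteq> s"
      using that by (auto simp: \<rho>_def)
    ultimately show "blaschke_factor s z \<noteq> 0"
      using add_cnj_nonzero assms(3) by (simp add: blaschke_factor_def)
  qed
  have "(\<lambda>z. k z / blaschke_factor s z) holomorphic_on ball s' \<rho>"
    using nonzero pos add_cnj_nonzero assms(3) unfolding blaschke_factor_def
    by (intro holomorphic_intros holomorphic_on_subset[OF k]) (auto simp: \<rho>_def)
  moreover have "g z = (z - s') ^ m * (k z / blaschke_factor s z)" if z: "z \<in> ball s' \<rho> - {s'}" for z
  proof -
    have "blaschke_factor s z * g z = h z"
      using eq pos z by simp
    also have "\<dots> = (z - s') ^ m * k z"
      using h z by (simp add: \<rho>_def)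
    finally show ?thesis
      using nonzero z by (simp add: field_simps)
  qed
  ultimately show ?thesis
    unfolding zero_order_ge_def using \<open>\<rho> > 0\<close> by blast
qed

lemma zero_order_ge_divide_blaschke_factor_self:
  assumes "zero_order_ge h s m" "m > 0" "Re s > 0"
    and eq: "\<And>z. Re z > 0 \<Longrightarrow> h z = blaschke_factor s z * g z"
  shows "zero_order_ge g s (m - 1)"
proof -
  obtain r k where "r > 0" and k: "k holomorphic_on ball s r"
    and h: "\<forall>z\<in>ball s r - {s}. h z = (z - s) ^ m * k z"
    using assms(1) unfolding zero_order_ge_def by blast
  define \<rho> where "\<rho> = min r (Re s)"
  have "\<rho> > 0" using \<open>r > 0\<close> assms(3) by (simp add: \<rho>_def)
  have "(\<lambda>z. k z * (z + cnj s)) holomorphic_on ball s \<rho>"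
    by (intro holomorphic_intros holomorphic_on_subset[OF k]) (auto simp: \<rho>_def)
  moreover have "g z = (z - s) ^ (m - 1) * (k z * (z + cnj s))" if z: "z \<in> ball s \<rho> - {s}" for z
  proof -
    have "Re z > 0"
      using z ball_subset_half_plane[OF assms(3)] by (auto simp: \<rho>_def)
    then have "z + cnj s \<noteq> 0" "z - s \<noteq> 0"
      using add_cnj_nonzero assms(3) z by auto
    have "(z - s) / (z + cnj s) * g z = (z - s) * (z - s) ^ (m - 1) * k z"
      using h eq[OF \<open>Re z > 0\<close>] z assms(2)
      by (auto simp: \<rho>_def blaschke_factor_def power_eq_if)
    then have "(z - s) * g z = (z - s) * ((z - s) ^ (m - 1) * (k z * (z + cnj s)))"
      using \<open>z + cnj s \<noteq> 0\<close> by (simp add: field_simps)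
    then show ?thesis
      using \<open>z - s \<noteq> 0\<close> by simp
  qed
  ultimately show ?thesis
    unfolding zero_order_ge_def using \<open>\<rho> > 0\<close> by blast
qed

lemma divide_blaschke_factor:
  assumes holo: "h holomorphic_on {z. Re z > 0}" and bound: "\<And>z. Re z > 0 \<Longrightarrow> cmod (h z) \<le> 1"
    and "S \<subseteq> {z. Re z > 0}" "\<And>t. t \<in> S \<Longrightarrow> zero_order_ge h t (m t)" "s \<in> S" "m s > 0"
  obtains g where "g holomorphic_on {z. Re z > 0}" "\<And>z. Re z > 0 \<Longrightarrow> cmod (g z) \<le> 1"
    "\<And>z. Re z > 0 \<Longrightarrow> h z = blaschke_factor s z * g z"
    "\<And>t. t \<in> S \<Longrightarrow> zero_order_ge g t ((m(s := m s - 1)) t)"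
proof
  have "Re s > 0"
    using assms(3,5) by auto
  moreover have "isCont h s"
    using holo \<open>Re s > 0\<close> open_halfspace_Re_gt
    by (metis continuous_on_eq_continuous_at holomorphic_on_imp_continuous_on mem_Collect_eq)
  ultimately have "h s = 0"
    using zero_order_ge_imp_zero assms(4-6) by blast
  let ?g = "blaschke_quotient h s"
  show "?g holomorphic_on {z. Re z > 0}"
    by (rule blaschke_quotient_holomorphic[OF holo])
  show "cmod (?g z) \<le> 1" if "Re z > 0" for z
    by (rule norm_blaschke_quotient_le_1[OF holo bound \<open>Re s > 0\<close> \<open>h s = 0\<close> that])
  show h_eq: "h z = blaschke_factor s z * ?g z" if "Re z > 0" for z
    by (rule blaschke_factor_mult_quotient[of s h z, OF \<open>Re s > 0\<close> \<open>h s = 0\<close> that])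
  show "zero_order_ge ?g t ((m(s := m s - 1)) t)" if "t \<in> S" for t
    using assms(3,4,6) that zero_order_ge_divide_blaschke_factor_self[OF _ _ \<open>Re s > 0\<close> h_eq]
      zero_order_ge_divide_blaschke_factor_other[OF _ _ \<open>Re s > 0\<close> _ h_eq]
    by auto
qed

lemma norm_le_blaschke_product:
  assumes "h holomorphic_on {z. Re z > 0}" "\<And>z. Re z > 0 \<Longrightarrow> cmod (h z) \<le> 1"
    and "finite S" "S \<subseteq> {z. Re z > 0}" "\<And>s. s \<in> S \<Longrightarrow> zero_order_ge h s (m s)"
    and "Re z > 0"
  shows "cmod (h z) \<le> (\<Prod>s\<in>S. cmod (blaschke_factor s z) ^ m s)"
  using assms(1,2,5)
proof (induction "sum m S" arbitrary: h m)
  case 0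
  then show ?case
    using \<open>finite S\<close> \<open>Re z > 0\<close> by simp
next
  case (Suc n)
  then obtain s where s: "s \<in> S" "m s > 0"
    by (metis gr0I sum.neutral nat.distinct(1))
  obtain g where g: "g holomorphic_on {z. Re z > 0}" "\<And>z. Re z > 0 \<Longrightarrow> cmod (g z) \<le> 1"
    "\<And>z. Re z > 0 \<Longrightarrow> h z = blaschke_factor s z * g z"
    "\<And>t. t \<in> S \<Longrightarrow> zero_order_ge g t ((m(s := m s - 1)) t)"
    using divide_blaschke_factor[OF Suc.prems(1,2) assms(4) Suc.prems(3) s] by blast
  define m' where "m' = m(s := m s - 1)"
  have m_eq: "m t = m' t + (if t = s then 1 else 0)" for t
    using s(2) by (simp add: m'_def)
  have "n = sum m' S"
    using Suc.hyps(2) \<open>finite S\<close> s(1) by (simp add: m_eq sum.distrib)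
  then have "cmod (g z) \<le> (\<Prod>t\<in>S. cmod (blaschke_factor t z) ^ m' t)"
    using Suc.hyps(1) g unfolding m'_def by blast
  then have "cmod (h z) \<le> cmod (blaschke_factor s z) * (\<Prod>t\<in>S. cmod (blaschke_factor t z) ^ m' t)"
    using g(3)[OF \<open>Re z > 0\<close>] by (simp add: norm_mult mult_left_mono)
  also have "\<dots> = (\<Prod>t\<in>S. cmod (blaschke_factor t z) ^ m' t * (if t = s then cmod (blaschke_factor t z) else 1))"
    using \<open>finite S\<close> s(1) by (simp add: prod.distrib prod.delta mult.commute)
  also have "\<dots> = (\<Prod>t\<in>S. cmod (blaschke_factor t z) ^ m t)"
    by (intro prod.cong) (auto simp: m_eq)
  finally show ?case .
qed

section \<open>Zeros of bounded functions with a limit at infinity\<close>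

lemma sum_blaschke_defect_le:
  assumes "h holomorphic_on {z. Re z > 0}" "\<And>z. Re z > 0 \<Longrightarrow> cmod (h z) \<le> 1"
    and "finite S" "S \<subseteq> {z. Re z > 0}" "\<And>s. s \<in> S \<Longrightarrow> zero_order_ge h s (m s)"
    and "Re z > 0" "c > 0" "c \<le> cmod (h z)"
  shows "(\<Sum>s\<in>S. real (m s) * blaschke_defect s z) \<le> - 2 * ln c"
proof -
  have sq: "(cmod (blaschke_factor s z))\<^sup>2 = 1 - blaschke_defect s z" if "s \<in> S" for s
    using norm_blaschke_factor_sq[OF assms(6)] that assms(4) by auto
  have "c\<^sup>2 \<le> (cmod (h z))\<^sup>2"
    using assms(7,8) by (simp add: power_mono)
  also have "\<dots> \<le> (\<Prod>s\<in>S. cmod (blaschke_factor s z) ^ m s)\<^sup>2"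
    using norm_le_blaschke_product[OF assms(1-6)] by (simp add: power_mono)
  also have "\<dots> = (\<Prod>s\<in>S. ((cmod (blaschke_factor s z))\<^sup>2) ^ m s)"
    unfolding prod_power_distrib by (simp add: power_mult[symmetric] mult.commute)
  also have "\<dots> = (\<Prod>s\<in>S. (1 - blaschke_defect s z) ^ m s)"
    by (intro prod.cong) (simp_all add: sq)
  also have "\<dots> \<le> (\<Prod>s\<in>S. exp (- blaschke_defect s z) ^ m s)"
  proof (intro prod_mono conjI power_mono)
    fix s assume "s \<in> S"
    show "0 \<le> 1 - blaschke_defect s z"
      using sq[OF \<open>s \<in> S\<close>] by (metis zero_le_power2)
    then show "0 \<le> (1 - blaschke_defect s z) ^ m s"
      by simp
    show "1 - blaschke_defect s z \<le> exp (- blaschke_defect s z)"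
      using exp_ge_add_one_self[of "- blaschke_defect s z"] by simp
  qed
  also have "\<dots> = exp (- (\<Sum>s\<in>S. real (m s) * blaschke_defect s z))"
    using assms(3) by (simp add: exp_sum[symmetric] exp_of_nat_mult[symmetric] sum_negf mult.commute)
  finally have "2 * ln c \<le> - (\<Sum>s\<in>S. real (m s) * blaschke_defect s z)"
    using assms(7) by (metis ln_exp ln_le_cancel_iff exp_gt_zero zero_less_power ln_realpow of_nat_numeral)
  then show ?thesis by simp
qed

definition defect_primitive :: "real \<Rightarrow> complex \<Rightarrow> real \<Rightarrow> real" where
  "defect_primitive \<sigma> s t = 4 * \<sigma> * Re s / (\<sigma> + Re s) * arctan ((t - Im s) / (\<sigma> + Re s))"

lemma has_real_derivative_defect_primitive:
  assumes "\<sigma> > 0" "Re s > 0"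
  shows "(defect_primitive \<sigma> s has_real_derivative blaschke_defect s (Complex \<sigma> t)) (at t)"
proof -
  have *: "inverse (1 + (x / e)\<^sup>2) * (1 / e) = e / (e\<^sup>2 + x\<^sup>2)" if "e > 0" for x e :: real
    using that by (simp add: field_simps power2_eq_square)
  have "(defect_primitive \<sigma> s has_real_derivative 4 * \<sigma> * Re s / (\<sigma> + Re s) *
      (inverse (1 + ((t - Im s) / (\<sigma> + Re s))\<^sup>2) * (1 / (\<sigma> + Re s)))) (at t)"
    unfolding defect_primitive_def using assms
    by (auto intro!: derivative_eq_intros simp: add_nonneg_eq_0_iff)
  then show ?thesis
    using assms unfolding *[of "\<sigma> + Re s", OF add_pos_pos[OF assms]]
    by (simp add: blaschke_defect_def)
qed

lemma sum_defect_primitive_diff_le: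
  assumes "finite S" "\<sigma> > 0" "\<And>s. s \<in> S \<Longrightarrow> Re s > 0" "a \<le> b"
    and bound: "\<And>t. (\<Sum>s\<in>S. real (m s) * blaschke_defect s (Complex \<sigma> t)) \<le> C"
  shows "(\<Sum>s\<in>S. real (m s) * (defect_primitive \<sigma> s b - defect_primitive \<sigma> s a)) \<le> C * (b - a)"
proof -
  define \<Phi> where "\<Phi> t = (\<Sum>s\<in>S. real (m s) * defect_primitive \<sigma> s t) - C * t" for t
  have "(\<Phi> has_real_derivative (\<Sum>s\<in>S. real (m s) * blaschke_defect s (Complex \<sigma> t)) - C) (at t)" for t
    unfolding \<Phi>_def using has_real_derivative_defect_primitive[OF assms(2,3)]
    by (auto intro!: derivative_eq_intros DERIV_sum simp: mult.commute)
  then have "\<Phi> b \<le> \<Phi> a"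
    using bound by (intro DERIV_nonpos_imp_nonincreasing[OF assms(4)]) (meson diff_le_0_iff_le)
  then show ?thesis
    by (simp add: \<Phi>_def sum_subtractf right_diff_distrib algebra_simps)
qed

lemma defect_primitive_diff_ge:
  assumes "0 < Re s" "Re s < \<sigma>\<^sub>1" "\<sigma>\<^sub>1 \<le> \<sigma>" "\<bar>Im s\<bar> < T" "R > 0"
  shows "8 * \<sigma> * arctan (R / (2 * \<sigma>)) / (\<sigma> + \<sigma>\<^sub>1) * Re s
    \<le> defect_primitive \<sigma> s (T + R) - defect_primitive \<sigma> s (- (T + R))"
proof -
  define e where "e = \<sigma> + Re s"
  have e: "0 < e" "e \<le> 2 * \<sigma>" "e \<le> \<sigma> + \<sigma>\<^sub>1"
    using assms by (auto simp: e_def)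
  have "R / (2 * \<sigma>) \<le> (T + R + y) / e" if "\<bar>y\<bar> < T" for y
  proof -
    have "R / (2 * \<sigma>) \<le> R / e"
      using e assms(5) by (intro divide_left_mono) auto
    also have "\<dots> \<le> (T + R + y) / e"
      using e that by (intro divide_right_mono) auto
    finally show ?thesis .
  qed
  from this[of "Im s"] this[of "- Im s"]
  have "2 * arctan (R / (2 * \<sigma>)) \<le> arctan ((T + R - Im s) / e) + arctan ((T + R + Im s) / e)"
    using assms(4) arctan_monotone' by (smt (verit) abs_minus_cancel)
  moreover have "4 * \<sigma> * Re s / (\<sigma> + \<sigma>\<^sub>1) \<le> 4 * \<sigma> * Re s / e"
    using e assms by (intro divide_left_mono) auto
  moreover have "arctan (R / (2 * \<sigma>)) \<ge> 0" "4 * \<sigma> * Re s / (\<sigma> + \<sigma>\<^sub>1) \<ge> 0"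
    using assms by auto
  ultimately have "4 * \<sigma> * Re s / (\<sigma> + \<sigma>\<^sub>1) * (2 * arctan (R / (2 * \<sigma>)))
      \<le> 4 * \<sigma> * Re s / e * (arctan ((T + R - Im s) / e) + arctan ((T + R + Im s) / e))"
    by (intro mult_mono) auto
  moreover have "arctan ((- (T + R) - Im s) / e) = - arctan ((T + R + Im s) / e)"
    by (simp add: arctan_minus[symmetric] minus_divide_left)
  ultimately show ?thesis
    by (simp add: defect_primitive_def e_def[symmetric] algebra_simps)
qed

lemma sum_Re_le_of_sum_blaschke_defect_le:
  assumes "finite S" "\<And>s. s \<in> S \<Longrightarrow> 0 < Re s \<and> Re s < \<sigma>\<^sub>1 \<and> \<bar>Im s\<bar> < T"
    and "0 < \<sigma>\<^sub>1" "\<sigma>\<^sub>1 \<le> \<sigma>" "R > 0" "T > 0"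
    and "\<And>t. (\<Sum>s\<in>S. real (m s) * blaschke_defect s (Complex \<sigma> t)) \<le> 2 * \<Lambda>"
  shows "(\<Sum>s\<in>S. real (m s) * Re s) \<le> \<Lambda> * (T + R) * (\<sigma> + \<sigma>\<^sub>1) / (2 * \<sigma> * arctan (R / (2 * \<sigma>)))"
proof -
  define Q where "Q = 8 * \<sigma> * arctan (R / (2 * \<sigma>)) / (\<sigma> + \<sigma>\<^sub>1)"
  have "Q > 0"
    using assms(3-5) by (simp add: Q_def)
  have "Q * (\<Sum>s\<in>S. real (m s) * Re s)
      \<le> (\<Sum>s\<in>S. real (m s) * (defect_primitive \<sigma> s (T + R) - defect_primitive \<sigma> s (- (T + R))))"
    unfolding sum_distrib_left
  proof (intro sum_mono)
    fix s assume "s \<in> S"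
    then have "Q * Re s \<le> defect_primitive \<sigma> s (T + R) - defect_primitive \<sigma> s (- (T + R))"
      using defect_primitive_diff_ge assms(2,4,5) unfolding Q_def by simp
    then show "Q * (real (m s) * Re s)
        \<le> real (m s) * (defect_primitive \<sigma> s (T + R) - defect_primitive \<sigma> s (- (T + R)))"
      by (metis mult.left_commute mult_left_mono of_nat_0_le_iff)
  qed
  also have "\<dots> \<le> 2 * \<Lambda> * ((T + R) - (- (T + R)))"
    using assms by (intro sum_defect_primitive_diff_le) auto
  finally show ?thesis
    using \<open>Q > 0\<close> assms(3,4) by (simp add: Q_def field_simps)
qed

lemma sum_Re_zeros_le:
  assumes holo: "h holomorphic_on {z. Re z > 0}" and bound: "\<And>z. Re z > 0 \<Longrightarrow> cmod (h z) \<le> 1"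
    and "0 < \<sigma>\<^sub>1" "0 < c" and far: "\<And>z. \<sigma>\<^sub>1 \<le> Re z \<Longrightarrow> c \<le> cmod (h z)"
    and S: "finite S" "S \<subseteq> {s. Re s > 0 \<and> \<bar>Im s\<bar> < T \<and> h s = 0}"
    and ord: "\<And>s. s \<in> S \<Longrightarrow> zero_order_ge h s (m s)"
    and "\<sigma>\<^sub>1 \<le> \<sigma>" "R > 0" "T > 0"
  shows "(\<Sum>s\<in>S. real (m s) * Re s) \<le> - ln c * (T + R) * (\<sigma> + \<sigma>\<^sub>1) / (2 * \<sigma> * arctan (R / (2 * \<sigma>)))"
proof (rule sum_Re_le_of_sum_blaschke_defect_le[OF S(1) _ \<open>0 < \<sigma>\<^sub>1\<close> \<open>\<sigma>\<^sub>1 \<le> \<sigma>\<close> \<open>R > 0\<close> \<open>T > 0\<close>])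
  fix s assume "s \<in> S"
  then have "\<not> \<sigma>\<^sub>1 \<le> Re s"
    using far[of s] S(2) \<open>0 < c\<close> by auto
  then show "0 < Re s \<and> Re s < \<sigma>\<^sub>1 \<and> \<bar>Im s\<bar> < T"
    using \<open>s \<in> S\<close> S(2) by auto
next
  fix t
  have "S \<subseteq> {z. Re z > 0}"
    using S(2) by auto
  moreover have "c \<le> cmod (h (Complex \<sigma> t))"
    using far \<open>\<sigma>\<^sub>1 \<le> \<sigma>\<close> by simp
  ultimately show "(\<Sum>s\<in>S. real (m s) * blaschke_defect s (Complex \<sigma> t)) \<le> 2 * - ln c"
    using sum_blaschke_defect_le[OF holo bound S(1) _ ord, of "Complex \<sigma> t" c]
      \<open>0 < \<sigma>\<^sub>1\<close> \<open>\<sigma>\<^sub>1 \<le> \<sigma>\<close> \<open>0 < c\<close> by simp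
qed

lemma arctan_ge_pi_half_minus_inverse:
  assumes "y > 0"
  shows "pi / 2 - 1 / y \<le> arctan y"
  using arctan_inverse[OF assms] arctan_le_self[of "1 / y"] assms
  by (simp add: inverse_eq_divide)

lemma zero_count_factor_le:
  assumes "0 < \<eta>" "\<eta> \<le> 1" "0 < \<sigma>" "0 < T"
    and R: "R = 2 * \<sigma> * (1 + \<eta>) / \<eta>" and "R \<le> \<eta> * T"
  shows "pi / T * ((T + R) * (\<sigma> + \<eta> * \<sigma>) / (2 * \<sigma> * arctan (R / (2 * \<sigma>)))) \<le> (1 + \<eta>) ^ 3"
proof -
  have y: "R / (2 * \<sigma>) = (1 + \<eta>) / \<eta>"
    using R \<open>0 < \<sigma>\<close> by simp
  have "pi / 2 \<le> pi / 2 + \<eta> * (pi / 2 - 1)"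
    using \<open>0 < \<eta>\<close> pi_gt3 by simp
  also have "\<dots> = (1 + \<eta>) * (pi / 2 - \<eta> / (1 + \<eta>))"
    using \<open>0 < \<eta>\<close> by (simp add: field_simps)
  also have "\<dots> \<le> (1 + \<eta>) * arctan (R / (2 * \<sigma>))"
    using arctan_ge_pi_half_minus_inverse[of "(1 + \<eta>) / \<eta>"] \<open>0 < \<eta>\<close> y by simp
  finally have "pi / 2 \<le> (1 + \<eta>) * arctan (R / (2 * \<sigma>))" .
  moreover have "arctan (R / (2 * \<sigma>)) > 0"
    using \<open>0 < \<eta>\<close> y by simp
  ultimately have "pi / (2 * arctan (R / (2 * \<sigma>))) \<le> 1 + \<eta>"
    by (simp add: pos_divide_le_eq mult.commute)
  moreover have "(T + R) / T \<le> 1 + \<eta>"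
    using assms(4,6) by (simp add: field_simps)
  moreover have "(\<sigma> + \<eta> * \<sigma>) / \<sigma> = 1 + \<eta>"
    using \<open>0 < \<sigma>\<close> by (simp add: field_simps)
  moreover have "0 \<le> (T + R) / T" "0 \<le> pi / (2 * arctan (R / (2 * \<sigma>)))"
    using assms y by simp_all
  ultimately have "(T + R) / T * ((\<sigma> + \<eta> * \<sigma>) / \<sigma>) * (pi / (2 * arctan (R / (2 * \<sigma>))))
      \<le> (1 + \<eta>) * (1 + \<eta>) * (1 + \<eta>)"
    using \<open>0 < \<eta>\<close> by (intro mult_mono) auto
  moreover have "pi / T * ((T + R) * (\<sigma> + \<eta> * \<sigma>) / (2 * \<sigma> * arctan (R / (2 * \<sigma>))))
      = (T + R) / T * ((\<sigma> + \<eta> * \<sigma>) / \<sigma>) * (pi / (2 * arctan (R / (2 * \<sigma>))))"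
    by (simp add: field_simps)
  ultimately show ?thesis
    by (simp add: power3_eq_cube)
qed

text \<open>Tending to a limit along \<^term>\<open>filtercomap Re at_top\<close> means uniformly in \<open>Im z\<close>
  as \<open>Re z \<rightarrow> \<infinity>\<close>.\<close>
lemma filtercomap_Re_at_top_neq_bot: "filtercomap Re at_top \<noteq> bot"
  by (rule filtercomap_neq_bot_surj) (auto simp: surj_def intro: exI[of _ "complex_of_real _"])

lemma eventually_Re_gt_filtercomap: "eventually (\<lambda>z. Re z > c) (filtercomap Re at_top)"
  unfolding eventually_filtercomap_at_top_linorder by (intro exI[of _ "c + 1"]) auto

lemma sum_Re_zeros_le_scaled:
  assumes holo: "h holomorphic_on {z. Re z > 0}" and bound: "\<And>z. Re z > 0 \<Longrightarrow> cmod (h z) \<le> 1"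
    and "0 < \<eta>" "\<eta> \<le> 1" "0 < \<sigma>\<^sub>1" "0 < c" and far: "\<And>z. \<sigma>\<^sub>1 \<le> Re z \<Longrightarrow> c \<le> cmod (h z)"
    and S: "finite S" "S \<subseteq> {s. Re s > 0 \<and> \<bar>Im s\<bar> < T \<and> h s = 0}"
    and ord: "\<And>s. s \<in> S \<Longrightarrow> zero_order_ge h s (m s)"
    and T: "2 * \<sigma>\<^sub>1 * (1 + \<eta>) / \<eta> ^ 3 \<le> T"
  shows "pi / T * (\<Sum>s\<in>S. real (m s) * Re s) \<le> - ln c * (1 + \<eta>) ^ 3"
proof -
  define \<sigma> where "\<sigma> = \<sigma>\<^sub>1 / \<eta>"
  define R where "R = 2 * \<sigma> * (1 + \<eta>) / \<eta>"
  have "\<sigma> > 0" "\<sigma>\<^sub>1 \<le> \<sigma>" "\<sigma>\<^sub>1 = \<eta> * \<sigma>"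
    using assms(3-5) by (simp_all add: \<sigma>_def field_simps)
  have "R > 0"
    unfolding R_def using \<open>\<sigma> > 0\<close> \<open>0 < \<eta>\<close> by (intro divide_pos_pos mult_pos_pos) auto
  have "R \<le> \<eta> * T"
    using T \<open>0 < \<eta>\<close> by (simp add: R_def \<sigma>_def field_simps power3_eq_cube)
  then have "0 < \<eta> * T"
    using \<open>R > 0\<close> by linarith
  then have "T > 0"
    using \<open>0 < \<eta>\<close> zero_less_mult_pos by blast
  have "c \<le> 1"
    using far[of "of_real \<sigma>\<^sub>1"] bound[of "of_real \<sigma>\<^sub>1"] \<open>0 < \<sigma>\<^sub>1\<close> by simp
  then have "- ln c \<ge> 0"
    using \<open>0 < c\<close> by simp
  have "(\<Sum>s\<in>S. real (m s) * Re s) \<le> - ln c * (T + R) * (\<sigma> + \<sigma>\<^sub>1) / (2 * \<sigma> * arctan (R / (2 * \<sigma>)))"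
    by (rule sum_Re_zeros_le[OF holo bound \<open>0 < \<sigma>\<^sub>1\<close> \<open>0 < c\<close> far S ord \<open>\<sigma>\<^sub>1 \<le> \<sigma>\<close> \<open>R > 0\<close> \<open>T > 0\<close>])
  then have "pi / T * (\<Sum>s\<in>S. real (m s) * Re s)
      \<le> pi / T * (- ln c * (T + R) * (\<sigma> + \<sigma>\<^sub>1) / (2 * \<sigma> * arctan (R / (2 * \<sigma>))))"
    using \<open>T > 0\<close> by (intro mult_left_mono) auto
  also have "\<dots> = - ln c * (pi / T * ((T + R) * (\<sigma> + \<eta> * \<sigma>) / (2 * \<sigma> * arctan (R / (2 * \<sigma>)))))"
    by (simp add: \<open>\<sigma>\<^sub>1 = \<eta> * \<sigma>\<close> times_divide_eq_right times_divide_eq_left mult_ac)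
  also have "\<dots> \<le> - ln c * (1 + \<eta>) ^ 3"
    using zero_count_factor_le[OF \<open>0 < \<eta>\<close> \<open>\<eta> \<le> 1\<close> \<open>\<sigma> > 0\<close> \<open>T > 0\<close> R_def \<open>R \<le> \<eta> * T\<close>] \<open>- ln c \<ge> 0\<close>
    by (intro mult_left_mono) auto
  finally show ?thesis .
qed

lemma eventually_sum_Re_zeros_le:
  assumes holo: "h holomorphic_on {z. Re z > 0}" and bound: "\<And>z. Re z > 0 \<Longrightarrow> cmod (h z) \<le> 1"
    and lim: "((\<lambda>z. cmod (h z)) \<longlongrightarrow> c) (filtercomap Re at_top)" and "c > 0"
    and ord: "\<And>s. Re s > 0 \<Longrightarrow> h s = 0 \<Longrightarrow> zero_order_ge h s (m s)"
    and "\<delta> > 0"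
  shows "eventually (\<lambda>T. \<forall>S. finite S \<longrightarrow> S \<subseteq> {s. Re s > 0 \<and> \<bar>Im s\<bar> < T \<and> h s = 0} \<longrightarrow>
           pi / T * (\<Sum>s\<in>S. real (m s) * Re s) \<le> - ln c + \<delta>) at_top"
proof -
  have "((\<lambda>\<eta>. (- ln c + \<delta> / 2) * (1 + \<eta>) ^ 3) \<longlongrightarrow> - ln c + \<delta> / 2) (at_right 0)"
    by (auto intro!: tendsto_eq_intros)
  then have "eventually (\<lambda>\<eta>. (- ln c + \<delta> / 2) * (1 + \<eta>) ^ 3 < - ln c + \<delta> \<and> 0 < \<eta> \<and> \<eta> < 1) (at_right 0)"
    using \<open>\<delta> > 0\<close>
    by (intro eventually_conj order_tendstoD(2) eventually_at_right_less)
       (auto simp: eventually_at_right_field intro: exI[of _ 1])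
  then obtain \<eta> where \<eta>: "(- ln c + \<delta> / 2) * (1 + \<eta>) ^ 3 < - ln c + \<delta>" "0 < \<eta>" "\<eta> < 1"
    using eventually_happens trivial_limit_at_right_real by blast
  have "c * exp (- \<delta> / 2) < c"
    using \<open>c > 0\<close> \<open>\<delta> > 0\<close> by simp
  then obtain N where N: "\<And>z. N \<le> Re z \<Longrightarrow> c * exp (- \<delta> / 2) < cmod (h z)"
    using order_tendstoD(1)[OF lim] unfolding eventually_filtercomap_at_top_linorder by blast
  define \<sigma>\<^sub>1 where "\<sigma>\<^sub>1 = max 1 N"
  have far: "c * exp (- \<delta> / 2) \<le> cmod (h z)" if "\<sigma>\<^sub>1 \<le> Re z" for z
    using N[of z] that by (simp add: \<sigma>\<^sub>1_def)
  have "- ln (c * exp (- \<delta> / 2)) = - ln c + \<delta> / 2"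
    using \<open>c > 0\<close> by (simp add: ln_mult)
  then have scaled: "pi / T * (\<Sum>s\<in>S. real (m s) * Re s) \<le> - ln c + \<delta>"
    if "finite S" "S \<subseteq> {s. Re s > 0 \<and> \<bar>Im s\<bar> < T \<and> h s = 0}" "2 * \<sigma>\<^sub>1 * (1 + \<eta>) / \<eta> ^ 3 \<le> T"
    for S T
    using sum_Re_zeros_le_scaled[OF holo bound \<eta>(2) _ _ _ far that(1,2) _ that(3), of m] \<eta> ord that(2)
      \<open>c > 0\<close> by (force simp: \<sigma>\<^sub>1_def)
  show ?thesis
    using eventually_ge_at_top[of "2 * \<sigma>\<^sub>1 * (1 + \<eta>) / \<eta> ^ 3"]
    by eventually_elim (use scaled in blast)
qed

section \<open>Dirichlet series\<close>

lemma norm_of_nat_powr: "cmod (of_nat n powr s) = real n powr Re s"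
  using norm_powr_real_powr[of "of_nat n" s] by (cases "n = 0") auto

lemma tendsto_powr_neg_at_top:
  fixes b :: real
  assumes "b > 1"
  shows "((\<lambda>x. b powr (- x)) \<longlongrightarrow> 0) at_top"
proof -
  have "filterlim (\<lambda>x. x * ln b) at_top at_top"
    using assms by (intro filterlim_at_top_mult_tendsto_pos[OF tendsto_const]) (auto simp: filterlim_ident)
  then have "filterlim (\<lambda>x. - x * ln b) at_bot at_top"
    by (simp add: filterlim_uminus_at_bot)
  then show ?thesis
    using assms by (simp add: powr_def filterlim_compose[OF exp_at_bot])
qed

lemma dirichlet_series_abs_summable:
  assumes "summable (\<lambda>n. a (Suc n) * of_nat (Suc n) powr (- s))" "Re w > Re s + 1"
  shows "summable (\<lambda>n. cmod (a (Suc n)) * real (Suc n) powr (- Re w))"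
proof -
  have "Bseq (\<lambda>n. a (Suc n) * of_nat (Suc n) powr (- s))"
    using summable_LIMSEQ_zero[OF assms(1)] convergent_imp_Bseq convergentI by blast
  then obtain M where "\<forall>n. cmod (a (Suc n) * of_nat (Suc n) powr (- s)) \<le> M"
    unfolding Bseq_def by blast
  then have M: "cmod (a (Suc n)) * real (Suc n) powr (- Re s) \<le> M" for n
    by (simp add: norm_mult norm_of_nat_powr del: of_nat_Suc)
  have bound: "cmod (a (Suc n)) * real (Suc n) powr (- Re w) \<le> M * real (Suc n) powr (Re s - Re w)" for n
  proof -
    have "cmod (a (Suc n)) * real (Suc n) powr (- Re w)
        = cmod (a (Suc n)) * real (Suc n) powr (- Re s) * real (Suc n) powr (Re s - Re w)"
      by (simp add: mult.assoc powr_add[symmetric])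
    also have "\<dots> \<le> M * real (Suc n) powr (Re s - Re w)"
      using M by (intro mult_right_mono) auto
    finally show ?thesis .
  qed
  have "summable (\<lambda>n. M * real (Suc n) powr (Re s - Re w))"
    using assms(2) summable_iff_shift[of "\<lambda>n. real n powr (Re s - Re w)" 1]
    by (intro summable_mult) (simp add: summable_real_powr_iff)
  then show ?thesis
    by (rule summable_comparison_test'[where N = 0]) (simp add: bound del: of_nat_Suc)
qed

lemma dirichlet_term_tendsto:
  "((\<lambda>z. a (Suc n) * of_nat (Suc n) powr (- z)) \<longlongrightarrow> (if n = 0 then a 1 else 0)) (filtercomap Re at_top)"
proof (cases "n = 0")
  case True
  then show ?thesis
    by (simp add: powr_def)
next
  case False
  have "((\<lambda>x. cmod (a (Suc n)) * real (Suc n) powr (- x)) \<longlongrightarrow> cmod (a (Suc n)) * 0) at_top"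
    using False by (intro tendsto_mult tendsto_const tendsto_powr_neg_at_top) simp
  from filterlim_filtercomapI[OF this, of Re]
  have "((\<lambda>z. cmod (a (Suc n) * of_nat (Suc n) powr (- z))) \<longlongrightarrow> 0) (filtercomap Re at_top)"
    by (simp add: norm_mult norm_of_nat_powr del: of_nat_Suc)
  then show ?thesis
    using False by (simp add: tendsto_norm_zero_iff)
qed

lemma norm_dirichlet_term_le:
  assumes "\<sigma> \<le> Re z"
  shows "cmod (a (Suc n) * of_nat (Suc n) powr (- z)) \<le> cmod (a (Suc n)) * real (Suc n) powr (- \<sigma>)"
proof -
  have "real (Suc n) powr (- Re z) \<le> real (Suc n) powr (- \<sigma>)"
    using assms by (intro powr_mono) auto
  then show ?thesis
    by (simp add: norm_mult norm_of_nat_powr mult_left_mono del: of_nat_Suc)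
qed

lemma dirichlet_series_tendsto_first_coeff:
  assumes "\<And>s. Re s > \<kappa> \<Longrightarrow> (\<lambda>n. a (Suc n) * of_nat (Suc n) powr (- s)) sums f s"
  shows "(f \<longlongrightarrow> a 1) (filtercomap Re at_top)"
proof -
  define \<sigma> where "\<sigma> = \<bar>\<kappa>\<bar> + 1"
  have "summable (\<lambda>n. a (Suc n) * of_nat (Suc n) powr (- of_real \<sigma>))"
    using assms[of "of_real \<sigma>"] abs_ge_self[of \<kappa>] by (auto simp: \<sigma>_def sums_summable)
  then have summable: "summable (\<lambda>n. cmod (a (Suc n)) * real (Suc n) powr (- (\<sigma> + 2)))"
    using dirichlet_series_abs_summable[of a "of_real \<sigma>" "of_real (\<sigma> + 2)"] by simp
  have bound: "eventually (\<lambda>(n, z). cmod (a (Suc n) * of_nat (Suc n) powr (- z))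
      \<le> cmod (a (Suc n)) * real (Suc n) powr (- (\<sigma> + 2))) (at_top \<times>\<^sub>F filtercomap Re at_top)"
    unfolding eventually_prod_filter
  proof (rule exI[of _ "\<lambda>_. True"], rule exI[of _ "\<lambda>z. \<sigma> + 2 \<le> Re z"], intro conjI allI impI)
    show "eventually (\<lambda>z. \<sigma> + 2 \<le> Re z) (filtercomap Re at_top)"
      unfolding eventually_filtercomap_at_top_linorder by blast
  next
    fix n z assume "\<sigma> + 2 \<le> Re z"
    from norm_dirichlet_term_le[OF this, of a n]
    show "case (n, z) of (n, z) \<Rightarrow> cmod (a (Suc n) * of_nat (Suc n) powr (- z))
        \<le> cmod (a (Suc n)) * real (Suc n) powr (- (\<sigma> + 2))"
      by simp
  qed simp
  have "(\<Sum>n. if n = 0 then a 1 else 0) = a 1"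
    using sums_single[of 0 "\<lambda>_. a 1"] by (simp add: sums_iff)
  then have "((\<lambda>z. \<Sum>n. a (Suc n) * of_nat (Suc n) powr (- z)) \<longlongrightarrow> a 1) (filtercomap Re at_top)"
    using tannerys_theorem[where a = "\<lambda>n z. a (Suc n) * of_nat (Suc n) powr (- z)",
        OF dirichlet_term_tendsto[of a] bound summable filtercomap_Re_at_top_neq_bot]
    by (simp only:)
  moreover have "eventually (\<lambda>z. (\<Sum>n. a (Suc n) * of_nat (Suc n) powr (- z)) = f z) (filtercomap Re at_top)"
    using eventually_Re_gt_filtercomap[of \<kappa>] by eventually_elim (rule sums_unique[symmetric, OF assms])
  ultimately show ?thesis
    by (rule Lim_transform_eventually)
qed

section \<open>The counting function\<close>

lemma Limsup_le_of_eventually_le: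
  assumes "\<And>\<delta>. \<delta> > 0 \<Longrightarrow> eventually (\<lambda>x. g x \<le> ereal (L + \<delta>)) F"
  shows "Limsup F g \<le> ereal L"
proof (rule ereal_le_epsilon2)
  fix \<delta> :: real assume "\<delta> > 0"
  then show "Limsup F g \<le> ereal L + ereal \<delta>"
    using Limsup_bounded[OF assms] by simp
qed

lemma N_count_le:
  assumes "T > 0"
    and bound: "\<And>S. finite S \<Longrightarrow> S \<subseteq> {s\<in>halfplane 0. \<bar>Im s\<bar> < T \<and> f s = \<xi>} \<Longrightarrow>
      pi / T * (\<Sum>s\<in>S. real (nat (zorder (\<lambda>z. f z - \<xi>) s)) * Re s) \<le> B"
  shows "N_count f \<xi> T \<le> ereal B"
proof -
  define Z where "Z = {s\<in>halfplane 0. \<bar>Im s\<bar> < T \<and> f s = \<xi>}"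
  define w where "w s = real (nat (zorder (\<lambda>z. f z - \<xi>) s)) * Re s" for s
  have "B \<ge> 0"
    using bound[of "{}"] by simp
  have "(\<Sum>\<^sub>\<infinity>s\<in>Z. ennreal (w s)) \<le> ennreal (T / pi * B)"
  proof (rule infsum_le_finite_sums)
    show "(\<lambda>s. ennreal (w s)) summable_on Z"
      by (rule nonneg_summable_on_complete) simp
    fix S assume S: "finite S" "S \<subseteq> Z"
    have "(\<Sum>s\<in>S. ennreal (w s)) = ennreal (\<Sum>s\<in>S. w s)"
      using S(2) by (intro sum_ennreal) (auto simp: Z_def w_def halfplane_def)
    also have "\<dots> \<le> ennreal (T / pi * B)"
      using bound[OF S(1)] S(2) \<open>T > 0\<close> by (intro ennreal_leI) (simp add: Z_def w_def field_simps)
    finally show "(\<Sum>s\<in>S. ennreal (w s)) \<le> ennreal (T / pi * B)" .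
  qed
  then have "enn2ereal (\<Sum>\<^sub>\<infinity>s\<in>Z. ennreal (w s)) \<le> ereal (T / pi * B)"
    using \<open>B \<ge> 0\<close> \<open>T > 0\<close> by (metis enn2ereal_ennreal less_eq_ennreal.rep_eq pi_gt_zero
      divide_nonneg_pos mult_nonneg_nonneg less_imp_le)
  then have "N_count f \<xi> T \<le> ereal (pi / T) * ereal (T / pi * B)"
    unfolding N_count_def Z_def[symmetric] w_def[symmetric] using \<open>T > 0\<close>
    by (intro ereal_mult_left_mono) auto
  then show ?thesis
    using \<open>T > 0\<close> by simp
qed

lemma Moebius_denominator_nonzero:
  assumes "cmod \<xi> < 1" "cmod w \<le> 1"
  shows "1 - cnj \<xi> * w \<noteq> 0"
proof -
  have "cmod (cnj \<xi> * w) \<le> cmod \<xi>"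
    using assms(2) by (simp add: norm_mult mult_left_le)
  then show ?thesis
    using assms(1) by auto
qed

lemma zero_order_ge_Moebius_function_comp:
  assumes "f holomorphic_on S" "open S" "connected S" "\<And>z. z \<in> S \<Longrightarrow> cmod (f z) < 1"
    and "cmod \<xi> < 1" "s \<in> S" "\<exists>w\<in>S. f w \<noteq> \<xi>"
  shows "zero_order_ge (\<lambda>z. Moebius_function 0 \<xi> (f z)) s (nat (zorder (\<lambda>z. f z - \<xi>) s))"
proof (rule zero_order_ge_mult[where S = S and u = "\<lambda>z. 1 / (1 - cnj \<xi> * f z)"])
  show "zero_order_ge (\<lambda>z. f z - \<xi>) s (nat (zorder (\<lambda>z. f z - \<xi>) s))"
    using assms by (intro zero_order_ge_zorder) (auto intro!: holomorphic_intros)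
  show "(\<lambda>z. 1 / (1 - cnj \<xi> * f z)) holomorphic_on S"
    using assms Moebius_denominator_nonzero by (auto intro!: holomorphic_intros simp: less_imp_le)
qed (use assms in \<open>auto simp: Moebius_function_simple\<close>)

lemma norm_limit_le_1:
  assumes "\<And>z. Re z > 0 \<Longrightarrow> cmod (f z) < 1" "(f \<longlongrightarrow> l) (filtercomap Re at_top)"
  shows "cmod l \<le> 1"
proof -
  have "eventually (\<lambda>z. cmod (f z) \<le> 1) (filtercomap Re at_top)"
    using eventually_Re_gt_filtercomap[of 0] by eventually_elim (simp add: assms(1) less_imp_le)
  then show ?thesis
    by (rule tendsto_upperbound[OF tendsto_norm[OF assms(2)] _ filtercomap_Re_at_top_neq_bot])
qed

lemma exists_value_neq_of_limit_neq:
  fixes f :: "complex \<Rightarrow> complex"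
  assumes "(f \<longlongrightarrow> l) (filtercomap Re at_top)" "\<xi> \<noteq> l"
  shows "\<exists>w. Re w > 0 \<and> f w \<noteq> \<xi>"
proof (rule ccontr)
  assume const: "\<not> (\<exists>w. Re w > 0 \<and> f w \<noteq> \<xi>)"
  have "eventually (\<lambda>z. \<xi> = f z) (filtercomap Re at_top)"
    using eventually_Re_gt_filtercomap[of 0] by eventually_elim (use const in auto)
  then have "(f \<longlongrightarrow> \<xi>) (filtercomap Re at_top)"
    by (rule Lim_transform_eventually[OF tendsto_const])
  then show False
    using assms tendsto_unique[OF filtercomap_Re_at_top_neq_bot] by blast
qed

lemma eventually_N_count_le:
  assumes holo: "f holomorphic_on {z. Re z > 0}" and into: "\<And>z. Re z > 0 \<Longrightarrow> cmod (f z) < 1"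
    and lim: "(f \<longlongrightarrow> l) (filtercomap Re at_top)" and "cmod \<xi> < 1" "\<xi> \<noteq> l" "\<delta> > 0"
  shows "eventually (\<lambda>T. N_count f \<xi> T \<le> ereal (ln (cmod ((1 - cnj \<xi> * l) / (\<xi> - l))) + \<delta>)) at_top"
proof -
  define G where "G = (\<lambda>z. Moebius_function 0 \<xi> (f z))"
  define c where "c = cmod (Moebius_function 0 \<xi> l)"
  have den: "1 - cnj \<xi> * l \<noteq> 0"
    by (rule Moebius_denominator_nonzero[OF \<open>cmod \<xi> < 1\<close> norm_limit_le_1[OF into lim]])
  have zeros: "G s = 0 \<longleftrightarrow> f s = \<xi>" if "Re s > 0" for s
    using Moebius_denominator_nonzero[OF \<open>cmod \<xi> < 1\<close> less_imp_le[OF into[OF that]]]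
    by (simp add: G_def Moebius_function_simple)
  have rhs: "- ln c = ln (cmod ((1 - cnj \<xi> * l) / (\<xi> - l)))"
    using den \<open>\<xi> \<noteq> l\<close> by (simp add: c_def Moebius_function_simple norm_divide ln_div norm_minus_commute)
  have "f ` {z. Re z > 0} \<subseteq> ball 0 1"
    using into by auto
  then have "G holomorphic_on {z. Re z > 0}"
    using holomorphic_on_compose_gen[OF holo Moebius_function_holomorphic[OF \<open>cmod \<xi> < 1\<close>]]
    by (simp add: G_def o_def)
  moreover have "cmod (G z) \<le> 1" if "Re z > 0" for z
    using Moebius_function_norm_lt_1[OF \<open>cmod \<xi> < 1\<close> into[OF that], of 0] by (simp add: G_def)
  moreover have "((\<lambda>z. cmod (G z)) \<longlongrightarrow> c) (filtercomap Re at_top)"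
    unfolding G_def c_def Moebius_function_simple using lim den by (intro tendsto_intros) auto
  moreover have "c > 0"
    using den \<open>\<xi> \<noteq> l\<close> by (simp add: c_def Moebius_function_simple)
  moreover have "zero_order_ge G s (nat (zorder (\<lambda>z. f z - \<xi>) s))" if "Re s > 0" for s
    unfolding G_def using that holo into \<open>cmod \<xi> < 1\<close> exists_value_neq_of_limit_neq[OF lim \<open>\<xi> \<noteq> l\<close>]
    by (intro zero_order_ge_Moebius_function_comp[where S = "{z. Re z > 0}"])
       (auto simp: open_halfspace_Re_gt convex_halfspace_Re_gt convex_connected)
  ultimately have "eventually (\<lambda>T. \<forall>S. finite S \<longrightarrow> S \<subseteq> {s. Re s > 0 \<and> \<bar>Im s\<bar> < T \<and> G s = 0} \<longrightarrow>
      pi / T * (\<Sum>s\<in>S. real (nat (zorder (\<lambda>z. f z - \<xi>) s)) * Re s) \<le> - ln c + \<delta>) at_top"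
    using \<open>\<delta> > 0\<close> by (intro eventually_sum_Re_zeros_le) auto
  then show ?thesis
    using eventually_gt_at_top[of 0]
  proof eventually_elim
    case (elim T)
    then show ?case
      using rhs by (intro N_count_le) (auto simp: halfplane_def zeros subset_iff)
  qed
qed

theorem theorem5p4:
  fixes f :: "complex \<Rightarrow> complex" and a :: "nat \<Rightarrow> complex" and \<xi> :: complex
  assumes "dirichlet_C0_to_D f a"
    and "\<xi> \<in> ball 0 1" and "\<xi> \<noteq> a 1"
  shows "Limsup at_top (\<lambda>T. N_count f \<xi> T)
           \<le> ereal (ln (cmod ((1 - cnj \<xi> * a 1) / (\<xi> - a 1))))"
proof -
  obtain \<kappa> where holo: "f holomorphic_on {z. Re z > 0}" and into: "\<And>z. Re z > 0 \<Longrightarrow> cmod (f z) < 1"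
    and sums: "\<And>s. Re s > \<kappa> \<Longrightarrow> (\<lambda>n. a (Suc n) * of_nat (Suc n) powr (- s)) sums f s"
    using assms(1) unfolding dirichlet_C0_to_D_def halfplane_def by auto
  have "(f \<longlongrightarrow> a 1) (filtercomap Re at_top)"
    using sums by (rule dirichlet_series_tendsto_first_coeff)
  then show ?thesis
    using eventually_N_count_le[OF holo into] assms(2,3)
    by (intro Limsup_le_of_eventually_le) auto
qed

end
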